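(* Let $\mathcal{H}=(V,E)$ be a linear hypergraph with $n$ vertices and let $k=\mathrm{ar}(\mathcal{H})$ be its antirank. If $k^2>n$ then $$|E|\le \frac{n(k-1)}{k^2-n}\qquad\text{and}\qquad \Delta(\mathcal{H})\le k.$$
   Context: A hypergraph $\mathcal{H}=(V,E)$ has a finite vertex set $V$ and a finite set $E$ of nonempty subsets of $V$ (hyperedges). It is linear if $|e\cap e'|\le 1$ for all distinct $e,e'\in E$. The antirank $\mathrm{ar}(\mathcal{H})$ is the minimum cardinality of a hyperedge. $\Delta(\mathcal{H})$ is the maximum over vertices $x$ of the degree $\mathrm{deg}_{\mathcal{H}}(x)$, the number of hyperedges containing $x$. *)

theory Defs
  imports Main Complex_Main
begin

definition hypergraph :: "'a set \<Rightarrow> 'a set set \<Rightarrow> bool" where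
  "hypergraph V E \<longleftrightarrow> finite V \<and> (\<forall>e\<in>E. e \<noteq> {} \<and> e \<subseteq> V)"

definition linear_hypergraph :: "'a set \<Rightarrow> 'a set set \<Rightarrow> bool" where
  "linear_hypergraph V E \<longleftrightarrow> hypergraph V E \<and>
     (\<forall>e\<in>E. \<forall>e'\<in>E. e \<noteq> e' \<longrightarrow> card (e \<inter> e') \<le> 1)"

text \<open>Antirank: minimum cardinality of a hyperedge (meaningful for E nonempty).\<close>
definition antirank :: "'a set set \<Rightarrow> nat" where
  "antirank E = Min (card ` E)"

definition hdegree :: "'a set set \<Rightarrow> 'a \<Rightarrow> nat" where
  "hdegree E x = card {e \<in> E. x \<in> e}"

definition max_degree :: "'a set \<Rightarrow> 'a set set \<Rightarrow> nat" where
  "max_degree V E = Max (hdegree E ` V)"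

end

(* Degrees: the edges through a vertex x, with x removed, are pairwise disjoint
   subsets of V - {x}, so deg x * (k - 1) <= n - 1 < (k + 1) * (k - 1).
   Edges: double counting gives sum_x deg x = sum_e |e| =: S >= m k, where m = |E|, and
   sum_x deg x ^ 2 = sum_(e,f) |e \<inter> f| <= S + m (m - 1) by linearity, so
   Cauchy-Schwarz yields S^2 <= n (S + m (m - 1)); since S >= m k this forces
   m (k^2 - n) <= n (k - 1). *)

theory Submission
  imports Defs "HOL-Analysis.Convex"
begin

lemma hypergraph_finite_edges:
  assumes "hypergraph V E"
  shows "finite E" and "e \<in> E \<Longrightarrow> finite e"
proof -
  have "E \<subseteq> Pow V" and "finite V"
    using assms unfolding hypergraph_def by auto
  then show "finite E" and "e \<in> E \<Longrightarrow> finite e"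
    by (auto intro: finite_subset)
qed

lemma sum_hdegree_eq_sum_card:
  assumes "hypergraph V E"
  shows "(\<Sum>x\<in>V. hdegree E x) = (\<Sum>e\<in>E. card e)"
  unfolding hdegree_def
proof (rule sum_multicount_gen)
  show "finite V" "finite E"
    using assms hypergraph_finite_edges by (auto simp: hypergraph_def)
  have "{x \<in> V. x \<in> e} = e" if "e \<in> E" for e
    using assms that unfolding hypergraph_def by auto
  then show "\<forall>e\<in>E. card {x \<in> V. x \<in> e} = card e"
    by simp
qed

lemma sum_hdegree_squared_eq_sum_card_Int:
  assumes "hypergraph V E"
  shows "(\<Sum>x\<in>V. (hdegree E x)^2) = (\<Sum>e\<in>E. \<Sum>f\<in>E. card (e \<inter> f))"
proof -
  have fin: "finite V" "finite E"
    using assms hypergraph_finite_edges by (auto simp: hypergraph_def)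
  have pairs: "(hdegree E x)^2 = card {p \<in> E \<times> E. x \<in> fst p \<inter> snd p}" for x
  proof -
    have "{p \<in> E \<times> E. x \<in> fst p \<inter> snd p} = {e \<in> E. x \<in> e} \<times> {e \<in> E. x \<in> e}"
      by auto
    then show ?thesis
      by (simp add: hdegree_def power2_eq_square card_cartesian_product)
  qed
  have "{x \<in> V. x \<in> fst p \<inter> snd p} = fst p \<inter> snd p" if "p \<in> E \<times> E" for p
    using assms that unfolding hypergraph_def by auto
  then have "(\<Sum>x\<in>V. card {p \<in> E \<times> E. x \<in> fst p \<inter> snd p})
      = (\<Sum>p\<in>E \<times> E. card (fst p \<inter> snd p))"
    using fin by (intro sum_multicount_gen) auto
  then show ?thesis
    by (simp add: pairs sum.cartesian_product split_def)
qed

lemma linear_hypergraph_sum_card_Int_le: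
  assumes "linear_hypergraph V E" "e \<in> E"
  shows "(\<Sum>f\<in>E. card (e \<inter> f)) \<le> card e + (card E - 1)"
proof -
  have "finite E"
    using assms hypergraph_finite_edges unfolding linear_hypergraph_def by blast
  then have "(\<Sum>f\<in>E. card (e \<inter> f)) = card e + (\<Sum>f\<in>E - {e}. card (e \<inter> f))"
    using assms(2) by (simp add: sum.remove)
  also have "(\<Sum>f\<in>E - {e}. card (e \<inter> f)) \<le> (\<Sum>f\<in>E - {e}. 1)"
    using assms unfolding linear_hypergraph_def by (intro sum_mono) auto
  also have "\<dots> = card E - 1"
    using \<open>finite E\<close> assms(2) by simp
  finally show ?thesis
    by simp
qed

lemma linear_hypergraph_hdegree_mult_le:
  assumes "linear_hypergraph V E" "x \<in> V" "\<forall>e\<in>E. k \<le> card e"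
  shows "hdegree E x * (k - 1) \<le> card V - 1"
proof -
  define F where "F = {e \<in> E. x \<in> e}"
  have hyp: "hypergraph V E"
    using assms(1) unfolding linear_hypergraph_def by blast
  then have "finite F" "finite V" and fin_e: "\<And>e. e \<in> F \<Longrightarrow> finite e"
    using hypergraph_finite_edges[OF hyp] by (auto simp: F_def hypergraph_def)
  have "e \<inter> f = {x}" if "e \<in> F" "f \<in> F" "e \<noteq> f" for e f
  proof -
    have "card (e \<inter> f) \<le> 1" "x \<in> e \<inter> f" "finite (e \<inter> f)"
      using assms(1) that fin_e unfolding linear_hypergraph_def F_def by auto
    then show ?thesis
      by (auto simp: card_le_Suc0_iff_eq)
  qed
  then have "card (\<Union>e\<in>F. e - {x}) = (\<Sum>e\<in>F. card (e - {x}))"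
    using \<open>finite F\<close> fin_e by (intro card_UN_disjoint) auto
  also have "\<dots> \<ge> (\<Sum>e\<in>F. k - 1)"
    using assms(3) fin_e by (intro sum_mono) (auto simp: F_def diff_le_mono)
  finally have "card F * (k - 1) \<le> card (\<Union>e\<in>F. e - {x})"
    by simp
  also have "\<dots> \<le> card (V - {x})"
    using hyp \<open>finite V\<close> by (intro card_mono) (auto simp: F_def hypergraph_def)
  finally show ?thesis
    using assms(2) \<open>finite V\<close> by (simp add: hdegree_def F_def)
qed

lemma linear_hypergraph_max_degree_le:
  assumes "linear_hypergraph V E" "V \<noteq> {}" "\<forall>e\<in>E. k \<le> card e" "card V < k^2"
  shows "max_degree V E \<le> k"
proof -
  have "finite V"
    using assms(1) unfolding linear_hypergraph_def hypergraph_def by blast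
  have "hdegree E x \<le> k" if "x \<in> V" for x
  proof -
    have "card V - 1 < k^2 - 1"
      using assms(2,4) \<open>finite V\<close> by (simp add: card_gt_0_iff Suc_le_eq diff_less_mono)
    also have "\<dots> = (k + 1) * (k - 1)"
      by (cases k) (simp_all add: power2_eq_square)
    finally have "hdegree E x * (k - 1) < (k + 1) * (k - 1)"
      using linear_hypergraph_hdegree_mult_le[OF assms(1) that assms(3)] by linarith
    then have "hdegree E x < k + 1"
      by (meson mult_less_cancel2)
    then show ?thesis
      by simp
  qed
  then show ?thesis
    using assms(2) \<open>finite V\<close> by (simp add: max_degree_def)
qed

lemma quadratic_bound_imp_linear_bound:
  fixes S m k n :: real
  assumes "0 < m" "1 \<le> k" "1 \<le> n" "m * k \<le> S" "S^2 \<le> n * (S + m * (m - 1))"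
  shows "m * (k^2 - n) \<le> n * (k - 1)"
proof (cases "n \<le> 2 * (m * k)")
  \<comment> \<open>\<open>t \<mapsto> t^2 - n t\<close> is increasing for \<open>t \<ge> n / 2\<close>\<close>
  case True
  then have "(m * k)^2 - n * (m * k) \<le> S^2 - n * S"
    using assms(4) mult_nonneg_nonneg[of "S - m * k" "S + m * k - n"]
    by (simp add: algebra_simps power2_eq_square)
  also have "\<dots> \<le> m * (n * (m - 1))"
    using assms(5) by (simp add: algebra_simps)
  finally have "m * (m * k^2 - n * k) \<le> m * (n * (m - 1))"
    by (simp add: algebra_simps power2_eq_square)
  then have "m * k^2 - n * k \<le> n * (m - 1)"
    using assms(1) by (simp only: mult_le_cancel_left_pos)
  then show ?thesis
    by (simp add: algebra_simps)
next
  case False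
  have "k^2 - n \<le> 2 * k * (k - 1)"
    using assms(3) zero_le_power2[of "k - 1"] by (simp add: power2_eq_square algebra_simps)
  then have "(2 * (m * k)) * (k^2 - n) \<le> (2 * (m * k)) * (2 * k * (k - 1))"
    using assms(1,2) by (intro mult_left_mono) auto
  also have "\<dots> \<le> n * (2 * k * (k - 1))"
    using False assms(2) by (intro mult_right_mono) auto
  finally have "(2 * k) * (m * (k^2 - n)) \<le> (2 * k) * (n * (k - 1))"
    by (simp add: algebra_simps)
  then show ?thesis
    using assms(2) by simp
qed

lemma hypergraph_nonempty_vertices:
  assumes "hypergraph V E" "E \<noteq> {}"
  shows "V \<noteq> {}"
  using assms unfolding hypergraph_def by blast

lemma linear_hypergraph_card_edges_bound:
  assumes "linear_hypergraph V E" "E \<noteq> {}" "\<forall>e\<in>E. k \<le> card e" "1 \<le> k"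
  shows "real (card E) * (real k ^ 2 - real (card V)) \<le> real (card V) * (real k - 1)"
proof -
  have hyp: "hypergraph V E"
    using assms(1) unfolding linear_hypergraph_def by blast
  then have "finite V" "finite E"
    using hypergraph_finite_edges by (auto simp: hypergraph_def)
  define m where "m = real (card E)"
  define S where "S = (\<Sum>x\<in>V. real (hdegree E x))"
  have S_eq: "S = (\<Sum>e\<in>E. real (card e))"
    unfolding S_def using sum_hdegree_eq_sum_card[OF hyp] by (metis of_nat_sum)
  have "m * k \<le> S"
    unfolding S_eq m_def using assms(3) sum_mono[of E "\<lambda>_. real k"] by auto
  have "card E \<ge> 1"
    using \<open>finite E\<close> assms(2) by (simp add: Suc_le_eq card_gt_0_iff)
  have "(\<Sum>x\<in>V. (hdegree E x)^2) \<le> (\<Sum>e\<in>E. card e + (card E - 1))"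
    unfolding sum_hdegree_squared_eq_sum_card_Int[OF hyp]
    using linear_hypergraph_sum_card_Int_le[OF assms(1)] by (rule sum_mono)
  also have "\<dots> = (\<Sum>e\<in>E. card e) + card E * (card E - 1)"
    by (simp add: sum.distrib)
  finally have "real (\<Sum>x\<in>V. (hdegree E x)^2) \<le> real ((\<Sum>e\<in>E. card e) + card E * (card E - 1))"
    by (rule of_nat_mono)
  then have squares: "(\<Sum>x\<in>V. real (hdegree E x)^2) \<le> S + m * (m - 1)"
    unfolding S_eq m_def using \<open>card E \<ge> 1\<close> by (simp add: of_nat_diff)
  have "S^2 \<le> real (card V) * (\<Sum>x\<in>V. real (hdegree E x)^2)"
    using Cauchy_Schwarz_ineq_sum[of "\<lambda>x. real (hdegree E x)" "\<lambda>_. 1" V]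
    by (simp add: S_def mult.commute)
  also have "\<dots> \<le> real (card V) * (S + m * (m - 1))"
    using squares by (rule mult_left_mono) simp
  finally have "S^2 \<le> real (card V) * (S + m * (m - 1))" .
  moreover have "1 \<le> real (card V)"
    using hypergraph_nonempty_vertices[OF hyp assms(2)] \<open>finite V\<close> by (simp add: Suc_le_eq card_gt_0_iff)
  moreover have "0 < m"
    using \<open>card E \<ge> 1\<close> by (simp add: m_def)
  ultimately show ?thesis
    using quadratic_bound_imp_linear_bound \<open>m * k \<le> S\<close> assms(4) by (simp add: m_def)
qed

theorem lemma3p1:
  fixes V :: "'a set" and E :: "'a set set" and n k :: nat
  assumes "linear_hypergraph V E"
    and "E \<noteq> {}"
    and "n = card V"
    and "k = antirank E"
    and "k^2 > n"
  shows "real (card E) \<le> real n * (real k - 1) / (real k ^ 2 - real n)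
         \<and> max_degree V E \<le> k"
proof
  have hyp: "hypergraph V E"
    using assms(1) unfolding linear_hypergraph_def by blast
  then have "finite E"
    by (rule hypergraph_finite_edges)
  then have k_le: "\<forall>e\<in>E. k \<le> card e"
    using assms(4) by (simp add: antirank_def)
  have "\<forall>e\<in>E. 1 \<le> card e"
    using hyp hypergraph_finite_edges(2)[OF hyp] by (auto simp: hypergraph_def Suc_le_eq card_gt_0_iff)
  then have "1 \<le> k"
    using assms(2,4) \<open>finite E\<close> by (simp add: antirank_def Min_ge_iff)
  have "real (card E) * (real k ^ 2 - real n) \<le> real n * (real k - 1)"
    using linear_hypergraph_card_edges_bound[OF assms(1,2) k_le \<open>1 \<le> k\<close>] assms(3) by simp
  moreover have "real n < real k ^ 2"
    using assms(5) by (metis of_nat_less_iff of_nat_power)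
  ultimately show "real (card E) \<le> real n * (real k - 1) / (real k ^ 2 - real n)"
    by (simp add: pos_le_divide_eq)
  show "max_degree V E \<le> k"
    using linear_hypergraph_max_degree_le[OF assms(1) hypergraph_nonempty_vertices[OF hyp assms(2)] k_le]
      assms(3,5) by blast
qed

end
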